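(* Let $\tilde L$ be a minimum-size counterexample. Then there are no elements $m,j\in\tilde L$ with $m$ meet-irreducible, $j$ join-irreducible, and $m<j$.
   Context: For a poset $P$, $x$ upper covers $y$ (and $y$ lower covers $x$) if $y<x$ with nothing strictly between. Join-irreducible: upper covers exactly one element; meet-irreducible: lower covers exactly one element. For $x\in P$, ${\uparrow}x=\{y: x\le y\}$. A counterexample is a finite lattice $L$ with $|L|>1$ in which every join-irreducible $j$ satisfies $|{\uparrow}j|>|L|/2$; a minimum-size counterexample is a counterexample $\tilde L$ such that no counterexample has fewer elements. *)

theory Defs
  imports "HOL-Algebra.Lattice"
begin

text \<open>Finite lattices are represented by HOL-Algebra's locale lattice on a record
  L of type 'a gorder (carrier, equality, order); the locale forces eq L = (=).\<close>

definition lt_in :: "'a gorder \<Rightarrow> 'a \<Rightarrow> 'a \<Rightarrow> bool" where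
  "lt_in L x y \<longleftrightarrow> le L x y \<and> x \<noteq> y"

definition upper_covers :: "'a gorder \<Rightarrow> 'a \<Rightarrow> 'a \<Rightarrow> bool" where
  "upper_covers L x y \<longleftrightarrow> x \<in> carrier L \<and> y \<in> carrier L \<and> lt_in L y x \<and>
     \<not> (\<exists>z\<in>carrier L. lt_in L y z \<and> lt_in L z x)"

definition join_irreducible :: "'a gorder \<Rightarrow> 'a \<Rightarrow> bool" where
  "join_irreducible L j \<longleftrightarrow> j \<in> carrier L \<and> card {y \<in> carrier L. upper_covers L j y} = 1"

definition meet_irreducible :: "'a gorder \<Rightarrow> 'a \<Rightarrow> bool" where
  "meet_irreducible L m \<longleftrightarrow> m \<in> carrier L \<and> card {x \<in> carrier L. upper_covers L x m} = 1"

definition up_set :: "'a gorder \<Rightarrow> 'a \<Rightarrow> 'a set" where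
  "up_set L x = {y \<in> carrier L. le L x y}"

definition counterexample :: "'a gorder \<Rightarrow> bool" where
  "counterexample L \<longleftrightarrow> lattice L \<and> finite (carrier L) \<and> card (carrier L) > 1 \<and>
     (\<forall>j. join_irreducible L j \<longrightarrow> 2 * card (up_set L j) > card (carrier L))"

text \<open>Every finite
  lattice is isomorphic to one carried by a subset of nat, so comparing against all
  counterexamples on nat quantifies over all finite lattices up to isomorphism.\<close>
definition min_counterexample :: "'a gorder \<Rightarrow> bool" where
  "min_counterexample L \<longleftrightarrow> counterexample L \<and>
     (\<forall>L' :: nat gorder. counterexample L' \<longrightarrow> card (carrier L) \<le> card (carrier L'))"

end

theory Submission
  imports Defs
begin

text \<open>Suppose \<open>m < j\<close> with \<open>m\<close> meet-irreducible and \<open>j\<close> join-irreducible, and let \<open>m'\<close> be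
  the unique upper cover of \<open>m\<close>; in a finite poset every element strictly above \<open>m\<close> is then
  above \<open>m'\<close>. Deleting \<open>m\<close> therefore leaves a lattice (a join equal to \<open>m\<close> is replaced
  by \<open>m'\<close>, and no meet of two other elements equals \<open>m\<close>) with one element fewer. Since
  \<open>\<up>j\<close> misses \<open>m\<close>, a join-irreducible \<open>k \<le> j\<close> of the smaller lattice keeps all of \<open>\<up>j\<close>
  above it; a join-irreducible \<open>k \<not>\<le> j\<close> differs from \<open>m' \<le> j\<close>, so it was already
  join-irreducible, and \<open>m \<notin> \<up>k\<close>. Either way the up-set is still larger than half the lattice,
  so the smaller lattice would be a smaller counterexample.\<close>

lemma partial_orderI:
  assumes "eq P = (=)"
    and "\<And>x. x \<in> carrier P \<Longrightarrow> le P x x"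
    and "\<And>x y. \<lbrakk>le P x y; le P y x; x \<in> carrier P; y \<in> carrier P\<rbrakk> \<Longrightarrow> x = y"
    and "\<And>x y z. \<lbrakk>le P x y; le P y z; x \<in> carrier P; y \<in> carrier P; z \<in> carrier P\<rbrakk>
           \<Longrightarrow> le P x z"
  shows "partial_order P"
  by unfold_locales (use assms in auto)

lemma (in partial_order) latticeI:
  assumes "\<And>x y. \<lbrakk>x \<in> carrier L; y \<in> carrier L\<rbrakk> \<Longrightarrow> \<exists>s. least L s (Upper L {x, y})"
    and "\<And>x y. \<lbrakk>x \<in> carrier L; y \<in> carrier L\<rbrakk> \<Longrightarrow> \<exists>s. greatest L s (Lower L {x, y})"
  shows "lattice L"
  using assms by unfold_locales

lemma meet_irreducibleE:
  assumes "meet_irreducible L m"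
  obtains m' where "upper_covers L m' m" and "\<And>x. upper_covers L x m \<Longrightarrow> x = m'"
proof -
  obtain m' where "{x \<in> carrier L. upper_covers L x m} = {m'}"
    using assms unfolding meet_irreducible_def by (auto simp: card_1_singleton_iff)
  then show thesis
    by (intro that) (auto simp: upper_covers_def)
qed

lemma exists_upper_cover_below:
  fixes L :: "'a gorder"
  assumes "partial_order L" and fin: "finite (carrier L)"
    and m: "m \<in> carrier L" and u: "u \<in> carrier L" and mu: "lt_in L m u"
  shows "\<exists>z. upper_covers L z m \<and> le L z u"
proof -
  interpret partial_order L by fact
  define T where "T = {z \<in> carrier L. lt_in L m z \<and> le L z u}"
  define down where "down z = {w \<in> carrier L. le L w z}" for z
  have "u \<in> T" using u mu by (simp add: T_def)
  then obtain z where zT: "z \<in> T" and zmin: "\<And>y. y \<in> T \<Longrightarrow> card (down z) \<le> card (down y)"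
    using ex_has_least_nat[of "\<lambda>z. z \<in> T" u "\<lambda>z. card (down z)"] by blast
  have z: "z \<in> carrier L" "lt_in L m z" "le L z u" using zT by (auto simp: T_def)
  have "upper_covers L z m"
    unfolding upper_covers_def
  proof (intro conjI z m notI)
    assume "\<exists>y\<in>carrier L. lt_in L m y \<and> lt_in L y z"
    then obtain y where y: "y \<in> carrier L" "lt_in L m y" "lt_in L y z" by blast
    have "y \<in> T" using y z u unfolding T_def lt_in_def by (auto intro: le_trans)
    moreover have "down y \<subset> down z"
      using y z unfolding down_def lt_in_def by (auto intro: le_trans)
    then have "card (down y) < card (down z)"
      using fin by (intro psubset_card_mono) (auto simp: down_def)
    ultimately show False using zmin by fastforce
  qed
  then show ?thesis using z by blast
qed

lemma meet_irreducible_cover_le: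
  fixes L :: "'a gorder"
  assumes po: "partial_order L" and fin: "finite (carrier L)" and mi: "meet_irreducible L m"
    and m': "upper_covers L m' m" and u: "u \<in> carrier L" and mu: "lt_in L m u"
  shows "le L m' u"
proof -
  have m: "m \<in> carrier L" using mi by (simp add: meet_irreducible_def)
  obtain z where z: "upper_covers L z m" "le L z u"
    using exists_upper_cover_below[OF po fin m u mu] by blast
  obtain m'' where "\<And>x. upper_covers L x m \<Longrightarrow> x = m''"
    using meet_irreducibleE[OF mi] by metis
  then have "z = m'" using z m' by metis
  then show ?thesis using z by simp
qed

definition pullback_order :: "('b \<Rightarrow> 'a) \<Rightarrow> 'b set \<Rightarrow> 'a gorder \<Rightarrow> 'b gorder" where
  "pullback_order f S L = \<lparr>carrier = S, eq = (=), le = (\<lambda>a b. le L (f a) (f b))\<rparr>"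

lemma pullback_order_simps [simp]:
  "carrier (pullback_order f S L) = S"
  "eq (pullback_order f S L) = (=)"
  "le (pullback_order f S L) a b = le L (f a) (f b)"
  by (simp_all add: pullback_order_def)

lemma lattice_pullback_order:
  fixes L :: "'a gorder"
  assumes "lattice L" and f: "bij_betw f S (carrier L)"
  shows "lattice (pullback_order f S L)" (is "lattice ?P")
proof -
  have fS: "f a \<in> carrier L" if "a \<in> S" for a
    using f that by (rule bij_betw_apply)
  have f_eq: "a = b" if "f a = f b" "a \<in> S" "b \<in> S" for a b
    using bij_betw_imp_inj_on[OF f] that by (rule inj_onD)
  have f_onto: "\<exists>c\<in>S. f c = z" if "z \<in> carrier L" for z
    using bij_betw_imp_surj_on[OF f] that by (metis imageE)
  interpret lattice L by fact
  interpret P: partial_order ?P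
  proof (rule partial_orderI)
    show "le ?P x x" if "x \<in> carrier ?P" for x
      using that by (simp add: fS)
    show "x = y" if "le ?P x y" "le ?P y x" "x \<in> carrier ?P" "y \<in> carrier ?P" for x y
      using that fS f_eq le_antisym by simp
    show "le ?P x z" if "le ?P x y" "le ?P y z"
      "x \<in> carrier ?P" "y \<in> carrier ?P" "z \<in> carrier ?P" for x y z
      using that by (simp add: fS le_trans)
  qed simp
  show ?thesis
  proof (rule P.latticeI)
    fix x y assume xy: "x \<in> carrier ?P" "y \<in> carrier ?P"
    then have fxy: "f x \<in> carrier L" "f y \<in> carrier L" by (simp_all add: fS)
    obtain c where c: "c \<in> S" "f c = f x \<squnion>\<^bsub>L\<^esub> f y"
      using f_onto fxy by (meson join_closed)
    have "least ?P c (Upper ?P {x, y})"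
    proof (rule least_UpperI)
      show "le ?P z c" if "z \<in> {x, y}" for z
        using that join_left[OF fxy] join_right[OF fxy] by (auto simp: c(2))
      show "le ?P c u" if "u \<in> Upper ?P {x, y}" for u
      proof -
        from that xy have "u \<in> S" "le L (f x) (f u)" "le L (f y) (f u)"
          unfolding Upper_def by simp_all
        then show ?thesis by (simp add: c(2) join_le fxy fS)
      qed
    qed (use xy c(1) in simp_all)
    then show "\<exists>s. least ?P s (Upper ?P {x, y})" ..
  next
    fix x y assume xy: "x \<in> carrier ?P" "y \<in> carrier ?P"
    then have fxy: "f x \<in> carrier L" "f y \<in> carrier L" by (simp_all add: fS)
    obtain c where c: "c \<in> S" "f c = f x \<sqinter>\<^bsub>L\<^esub> f y"
      using f_onto fxy by (meson meet_closed)
    have "greatest ?P c (Lower ?P {x, y})"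
    proof (rule greatest_LowerI)
      show "le ?P c z" if "z \<in> {x, y}" for z
        using that meet_left[OF fxy] meet_right[OF fxy] by (auto simp: c(2))
      show "le ?P u c" if "u \<in> Lower ?P {x, y}" for u
      proof -
        from that xy have "u \<in> S" "le L (f u) (f x)" "le L (f u) (f y)"
          unfolding Lower_def by simp_all
        then show ?thesis by (simp add: c(2) meet_le fxy fS)
      qed
    qed (use xy c(1) in simp_all)
    then show "\<exists>s. greatest ?P s (Lower ?P {x, y})" ..
  qed
qed

lemma bij_betw_Collect:
  assumes "bij_betw f S T"
  shows "bij_betw f {x \<in> S. Q (f x)} {y \<in> T. Q y}"
proof (rule bij_betw_subset[OF assms])
  show "f ` {x \<in> S. Q (f x)} = {y \<in> T. Q y}"
    using bij_betw_imp_surj_on[OF assms] by blast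
qed auto

lemma upper_covers_pullback_order:
  assumes f: "bij_betw f S (carrier L)" and a: "a \<in> S" and b: "b \<in> S"
  shows "upper_covers (pullback_order f S L) a b \<longleftrightarrow> upper_covers L (f a) (f b)"
proof -
  have between: "(\<exists>z\<in>S. lt_in L (f b) (f z) \<and> lt_in L (f z) (f a)) \<longleftrightarrow>
                 (\<exists>z\<in>carrier L. lt_in L (f b) z \<and> lt_in L z (f a))"
    unfolding bij_betw_imp_surj_on[OF f, symmetric] by simp
  have "inj_on f S"
    using f by (rule bij_betw_imp_inj_on)
  then show ?thesis
    using a b bij_betw_apply[OF f] between unfolding upper_covers_def lt_in_def
    by (auto simp: inj_on_eq_iff)
qed

lemma join_irreducible_pullback_order:
  assumes f: "bij_betw f S (carrier L)" and a: "a \<in> S"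
  shows "join_irreducible (pullback_order f S L) a \<longleftrightarrow> join_irreducible L (f a)"
proof -
  have "{b \<in> S. upper_covers (pullback_order f S L) a b} = {b \<in> S. upper_covers L (f a) (f b)}"
    using f a by (auto simp: upper_covers_pullback_order)
  then have "card {b \<in> S. upper_covers (pullback_order f S L) a b} =
             card {y \<in> carrier L. upper_covers L (f a) y}"
    using bij_betw_same_card[OF bij_betw_Collect[OF f, where Q = "upper_covers L (f a)"]]
    by simp
  then show ?thesis
    using a bij_betw_apply[OF f] by (simp add: join_irreducible_def)
qed

lemma card_up_set_pullback_order:
  assumes f: "bij_betw f S (carrier L)"
  shows "card (up_set (pullback_order f S L) a) = card (up_set L (f a))"
  using bij_betw_same_card[OF bij_betw_Collect[OF f, where Q = "le L (f a)"]]
  by (simp add: up_set_def)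

lemma counterexample_pullback_order:
  assumes ce: "counterexample L" and f: "bij_betw f S (carrier L)"
  shows "counterexample (pullback_order f S L)"
  unfolding counterexample_def
proof (intro conjI allI impI)
  show "lattice (pullback_order f S L)"
    using ce f by (simp add: counterexample_def lattice_pullback_order)
  show "finite (carrier (pullback_order f S L))" "1 < card (carrier (pullback_order f S L))"
    using ce bij_betw_finite[OF f] bij_betw_same_card[OF f] by (simp_all add: counterexample_def)
next
  fix a assume ji: "join_irreducible (pullback_order f S L) a"
  then have "a \<in> S" by (simp add: join_irreducible_def)
  with ji have "join_irreducible L (f a)" by (simp add: join_irreducible_pullback_order[OF f])
  then show "card (carrier (pullback_order f S L)) < 2 * card (up_set (pullback_order f S L) a)"
    using ce bij_betw_same_card[OF f] card_up_set_pullback_order[OF f]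
    by (simp add: counterexample_def)
qed

lemma min_counterexample_card_le:
  assumes "min_counterexample L" and "counterexample L'"
  shows "card (carrier L) \<le> card (carrier L')"
proof -
  \<comment> \<open>Minimality only quantifies over lattices on \<open>nat\<close>, so relabel \<open>L'\<close> onto an initial segment.\<close>
  obtain f where f: "bij_betw f {0..<card (carrier L')} (carrier L')"
    using assms(2) ex_bij_betw_nat_finite unfolding counterexample_def by blast
  then have "counterexample (pullback_order f {0..<card (carrier L')} L')"
    using assms(2) by (rule counterexample_pullback_order[rotated])
  then have "card (carrier L) \<le> card (carrier (pullback_order f {0..<card (carrier L')} L'))"
    using assms(1) by (simp only: min_counterexample_def)
  then show ?thesis by simp
qed

lemma lattice_remove_meet_irreducible:
  fixes L :: "'a gorder"
  assumes lat: "lattice L" and fin: "finite (carrier L)" and mi: "meet_irreducible L m"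
  shows "lattice (L\<lparr>carrier := carrier L - {m}\<rparr>)" (is "lattice ?L'")
proof -
  have po: "partial_order L"
    using lat unfolding lattice_def upper_semilattice_def by blast
  interpret lattice L by (fact lat)
  obtain m' where m': "upper_covers L m' m"
    using meet_irreducibleE[OF mi] by metis
  have m'_above: "m' \<in> carrier L" "le L m m'" "m' \<noteq> m"
    using m' unfolding upper_covers_def lt_in_def by blast+
  have m'_le: "le L m' u" if "u \<in> carrier L" "le L m u" "u \<noteq> m" for u
    using meet_irreducible_cover_le[OF po fin mi m'] that by (simp add: lt_in_def)
  interpret P: partial_order ?L'
  proof (rule partial_orderI)
    show "le ?L' x x" if "x \<in> carrier ?L'" for x
      using that by simp
    show "x = y" if "le ?L' x y" "le ?L' y x" "x \<in> carrier ?L'" "y \<in> carrier ?L'" for x y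
      using that le_antisym by simp
    show "le ?L' x z" if "le ?L' x y" "le ?L' y z"
      "x \<in> carrier ?L'" "y \<in> carrier ?L'" "z \<in> carrier ?L'" for x y z
      using that by (simp add: le_trans)
  qed (simp add: eq_is_equal)
  show ?thesis
  proof (rule P.latticeI)
    fix x y assume xy: "x \<in> carrier ?L'" "y \<in> carrier ?L'"
    then have x: "x \<in> carrier L" "x \<noteq> m" and y: "y \<in> carrier L" "y \<noteq> m" by simp_all
    \<comment> \<open>If the join was \<open>m\<close>, every remaining upper bound lies strictly above \<open>m\<close>, hence above \<open>m'\<close>.\<close>
    define s where "s = (if x \<squnion>\<^bsub>L\<^esub> y = m then m' else x \<squnion>\<^bsub>L\<^esub> y)"
    have s: "s \<in> carrier ?L'" "le L (x \<squnion>\<^bsub>L\<^esub> y) s"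
      using x y m'_above by (auto simp: s_def)
    have "least ?L' s (Upper ?L' {x, y})"
    proof (rule least_UpperI)
      show "le ?L' z s" if "z \<in> {x, y}" for z
      proof -
        have z: "z \<in> carrier L" "le L z (x \<squnion>\<^bsub>L\<^esub> y)"
          using that x y join_left join_right by auto
        moreover have "s \<in> carrier L"
          using s(1) by simp
        ultimately show ?thesis
          using le_trans[OF z(2) s(2) z(1) join_closed[OF x(1) y(1)]] by simp
      qed
      show "le ?L' s u" if "u \<in> Upper ?L' {x, y}" for u
      proof -
        from that xy have u: "u \<in> carrier L" "u \<noteq> m" "le L x u" "le L y u"
          unfolding Upper_def by simp_all
        then have "le L (x \<squnion>\<^bsub>L\<^esub> y) u"
          using x y by (simp add: join_le)
        then show ?thesis
          using u m'_le[of u] by (cases "x \<squnion>\<^bsub>L\<^esub> y = m") (simp_all add: s_def)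
      qed
    qed (use xy s in simp_all)
    then show "\<exists>s. least ?L' s (Upper ?L' {x, y})" ..
  next
    fix x y assume xy: "x \<in> carrier ?L'" "y \<in> carrier ?L'"
    then have x: "x \<in> carrier L" "x \<noteq> m" and y: "y \<in> carrier L" "y \<noteq> m" by simp_all
    have "x \<sqinter>\<^bsub>L\<^esub> y \<noteq> m"
    proof
      assume meet: "x \<sqinter>\<^bsub>L\<^esub> y = m"
      then have "le L m x" "le L m y"
        using x y meet_left meet_right by metis+
      then have "le L m' (x \<sqinter>\<^bsub>L\<^esub> y)"
        using x y m'_le m'_above by (simp add: meet_le)
      then show False
        using meet m'_above le_antisym[of m' m] meet_closed[OF x(1) y(1)] by simp
    qed
    then have "greatest ?L' (x \<sqinter>\<^bsub>L\<^esub> y) (Lower ?L' {x, y})"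
      using x y unfolding greatest_def Lower_def
      by (simp add: meet_left meet_right meet_le)
    then show "\<exists>s. greatest ?L' s (Lower ?L' {x, y})" ..
  qed
qed

lemma upper_covers_remove_meet_irreducible:
  fixes L :: "'a gorder"
  assumes po: "partial_order L" and fin: "finite (carrier L)" and mi: "meet_irreducible L m"
    and m': "upper_covers L m' m" and k: "k \<noteq> m" "k \<noteq> m'"
  shows "upper_covers (L\<lparr>carrier := carrier L - {m}\<rparr>) k y \<longleftrightarrow> upper_covers L k y"
    (is "upper_covers ?L' k y \<longleftrightarrow> _")
proof
  interpret partial_order L by (fact po)
  have m: "m \<in> carrier L" and m'_above: "m' \<in> carrier L" "le L m m'" "m' \<noteq> m"
    using m' unfolding upper_covers_def lt_in_def by blast+
  assume "upper_covers ?L' k y"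
  then have ky: "k \<in> carrier L" "y \<in> carrier L" "y \<noteq> m" "lt_in L y k"
    and no_between: "\<not> (\<exists>z \<in> carrier L - {m}. lt_in L y z \<and> lt_in L z k)"
    by (simp_all add: upper_covers_def lt_in_def)
  show "upper_covers L k y"
    unfolding upper_covers_def
  proof (intro conjI ky(1,2,4) notI)
    assume "\<exists>z\<in>carrier L. lt_in L y z \<and> lt_in L z k"
    then obtain z where z: "z \<in> carrier L" "lt_in L y z" "lt_in L z k" by blast
    with no_between have "z = m" by blast
    then have "le L m' k"
      using meet_irreducible_cover_le[OF po fin mi m' ky(1)] z by simp
    then have "lt_in L m' k"
      using k unfolding lt_in_def by simp
    moreover have "lt_in L y m'"
    proof -
      have "le L y m"
        using z \<open>z = m\<close> by (simp add: lt_in_def)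
      moreover have "le L y m'"
        using le_trans[OF \<open>le L y m\<close> m'_above(2) ky(2) m m'_above(1)] .
      moreover have "y \<noteq> m'"
      proof
        assume "y = m'"
        then have "y = m"
          using le_antisym[OF \<open>le L y m\<close> _ ky(2) m] m'_above(2) by simp
        with ky(3) show False by simp
      qed
      ultimately show ?thesis
        by (simp add: lt_in_def)
    qed
    ultimately show False
      using no_between m'_above by blast
  qed
next
  assume cover: "upper_covers L k y"
  have "y \<noteq> m"
  proof
    assume "y = m"
    obtain m'' where "\<And>x. upper_covers L x m \<Longrightarrow> x = m''"
      using meet_irreducibleE[OF mi] by metis
    then show False
      using cover m' k \<open>y = m\<close> by metis
  qed
  then show "upper_covers ?L' k y"
    using cover k(1) unfolding upper_covers_def lt_in_def by simp
qed

lemma join_irreducible_remove_meet_irreducible: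
  fixes L :: "'a gorder"
  assumes po: "partial_order L" and fin: "finite (carrier L)" and mi: "meet_irreducible L m"
    and m': "upper_covers L m' m"
    and ji: "join_irreducible (L\<lparr>carrier := carrier L - {m}\<rparr>) k" and "k \<noteq> m'"
  shows "join_irreducible L k"
proof -
  have k: "k \<in> carrier L" "k \<noteq> m"
    using ji by (simp_all add: join_irreducible_def)
  have "{y \<in> carrier L - {m}. upper_covers (L\<lparr>carrier := carrier L - {m}\<rparr>) k y} =
        {y \<in> carrier L. upper_covers L k y}"
    using upper_covers_remove_meet_irreducible[OF po fin mi m' k(2) \<open>k \<noteq> m'\<close>]
    by (auto simp: upper_covers_def)
  then show ?thesis
    using ji k by (simp add: join_irreducible_def)
qed

lemma counterexample_remove_meet_irreducible:
  fixes L :: "'a gorder"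
  assumes ce: "counterexample L" and mi: "meet_irreducible L m" and ji: "join_irreducible L j"
    and mj: "lt_in L m j"
  shows "counterexample (L\<lparr>carrier := carrier L - {m}\<rparr>)" (is "counterexample ?L'")
proof -
  have lat: "lattice L" and fin: "finite (carrier L)"
    and big: "\<And>k. join_irreducible L k \<Longrightarrow> card (carrier L) < 2 * card (up_set L k)"
    using ce by (simp_all add: counterexample_def)
  have po: "partial_order L"
    using lat unfolding lattice_def upper_semilattice_def by blast
  interpret partial_order L by (fact po)
  have m: "m \<in> carrier L" and j: "j \<in> carrier L"
    using mi ji by (simp_all add: meet_irreducible_def join_irreducible_def)
  obtain m' where m': "upper_covers L m' m"
    using meet_irreducibleE[OF mi] by metis
  have "le L m' j"
    using meet_irreducible_cover_le[OF po fin mi m' j mj] .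
  have up_set_remove: "up_set ?L' k = up_set L k - {m}" for k
    by (auto simp: up_set_def)
  have m_notin: "m \<notin> up_set L j"
  proof
    assume "m \<in> up_set L j"
    then have "le L j m"
      by (simp add: up_set_def)
    with mj show False
      using le_antisym[OF _ _ m j] by (simp add: lt_in_def)
  qed
  have "card (up_set L j) \<le> card (carrier L - {m})"
    using fin m_notin by (intro card_mono) (auto simp: up_set_def)
  then have card_L: "card (carrier L) \<ge> 3"
    using big[OF ji] fin m by simp
  have card_L': "card (carrier ?L') = card (carrier L) - 1"
    using fin m by simp
  show ?thesis
    unfolding counterexample_def
  proof (intro conjI allI impI)
    show "lattice ?L'"
      using lat fin mi by (rule lattice_remove_meet_irreducible)
    show "finite (carrier ?L')" "1 < card (carrier ?L')"
      using fin card_L card_L' by simp_all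
  next
    fix k assume kji: "join_irreducible ?L' k"
    then have k: "k \<in> carrier L" "k \<noteq> m"
      by (simp_all add: join_irreducible_def)
    show "card (carrier ?L') < 2 * card (up_set ?L' k)"
    proof (cases "le L k j")
      case True
      have "up_set L j \<subseteq> up_set ?L' k"
      proof
        fix y assume "y \<in> up_set L j"
        then have "y \<in> carrier L" "le L j y"
          by (simp_all add: up_set_def)
        then show "y \<in> up_set ?L' k"
          using le_trans[OF True _ k(1) j] m_notin \<open>y \<in> up_set L j\<close>
          unfolding up_set_remove by (auto simp: up_set_def)
      qed
      then have "card (up_set L j) \<le> card (up_set ?L' k)"
        using fin by (intro card_mono) (auto simp: up_set_def)
      then show ?thesis
        using big[OF ji] card_L card_L' by simp
    next
      case False
      then have "k \<noteq> m'"
        using \<open>le L m' j\<close> by blast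
      then have kji_L: "join_irreducible L k"
        using join_irreducible_remove_meet_irreducible[OF po fin mi m' kji] by simp
      have "m \<notin> up_set L k"
      proof
        assume "m \<in> up_set L k"
        then have "le L k m"
          by (simp add: up_set_def)
        with False show False
          using le_trans[OF _ _ k(1) m j] mj by (simp add: lt_in_def)
      qed
      then show ?thesis
        using big[OF kji_L] card_L card_L' up_set_remove[of k] by simp
    qed
  qed
qed

theorem theorem2p3:
  fixes L :: "'a gorder"
  assumes "min_counterexample L"
  shows "\<not> (\<exists>m\<in>carrier L. \<exists>j\<in>carrier L.
            meet_irreducible L m \<and> join_irreducible L j \<and> lt_in L m j)"
proof
  assume "\<exists>m\<in>carrier L. \<exists>j\<in>carrier L.
            meet_irreducible L m \<and> join_irreducible L j \<and> lt_in L m j"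
  then obtain m j where m: "m \<in> carrier L" and "meet_irreducible L m" "join_irreducible L j"
    "lt_in L m j"
    by blast
  moreover have ce: "counterexample L"
    using assms by (simp add: min_counterexample_def)
  ultimately have "counterexample (L\<lparr>carrier := carrier L - {m}\<rparr>)"
    by (intro counterexample_remove_meet_irreducible)
  then have "card (carrier L) \<le> card (carrier (L\<lparr>carrier := carrier L - {m}\<rparr>))"
    by (rule min_counterexample_card_le[OF assms])
  moreover have "card (carrier L - {m}) < card (carrier L)"
    using ce m by (intro card_Diff1_less) (simp_all add: counterexample_def)
  ultimately show False
    by simp
qed

end
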